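(* In the standing setting, assume (A1), (A4) and (A7). Let $(Z_k)_{k\ge1}$ be i.i.d. $N(0,I_d)$, let $s\in\mathbb N_+$ and let $(U_k)_{k\ge0}$ be mutually independent drift variables at level $s$, independent of $(Z_k)$, and let $X_0$ be independent of both with $\mathbb E|X_0|^4<\infty$. For $h>0$ define $X_{k+1}=X_k+hb(X_k,U_k)+\beta\sqrt hZ_{k+1}$. Then there exist $h_0>0$ and $C>0$, independent of $s$, $h$ and $k$, such that $\mathbb E|X_k|^4\le C$ for all $k\ge1$ and all $h\in(0,h_0)$.
   Context: Standing setting. Let $d,n\in\mathbb N_+$, $\beta\ge0$, and let $a:\mathbb R^d\to\mathbb R^d$, $b:\mathbb R^d\times\mathbb R^n\to\mathbb R^d$ be measurable. $|\cdot|$ is the Euclidean norm (Frobenius norm for matrices), $\nabla$ the Jacobian in $x$, $D^\alpha$ the partial derivative in $x$ for a multi-index $\alpha$. For each $s\in\mathbb N_+$ a law on $\mathbb R^n$ is given; a random variable with this law is a drift variable at level $s$ (generically $U^s$), and $\mathbb E[b(x,U^s)]=a(x)$ for all $x$. All constants below are independent of $s,x,y$. (A1) $|a(x)-a(y)|\le L|x-y|$; $\langle x-y,a(x)-a(y)\rangle\le-K|x-y|^2$ with $K>0$; $a\in C^2$ with $|D^\alpha a|\le C_{a^{(|\alpha|)}}$ for $|\alpha|=1,2$. (A2) $\mathbb E|b(x,U^s)-b(y,U^s)|^2\le\bar L^2|x-y|^2$. (A3) $\mathbb E|b(x,U^s)-a(x)|^2\le\sigma_s^2(1+|x|^2)$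 with $\sigma_s^2\le\kappa/s$. (A4) $\mathbb E|b(x,U^s)-a(x)|^4\le\sigma^{(4)}_s(1+|x|^4)$ with $\sigma^{(4)}_s\le\kappa/s^2$. (A5) for every $u$, $x\mapsto b(x,u)$ is $C^2$ with $|D^\alpha b(x,u)|\le C_{b^{(2)}}$ for $|\alpha|=2$, and $\mathbb E|\nabla b(x,U^s)-\nabla a(x)|^4\le\sigma^{(4)}_s(1+|x|^4)$. (A6) $\mathbb E[D^\alpha b(x,U^s)]=D^\alpha a(x)$ for $|\alpha|\le2$. (A7) $|a(x)|^4\le L_0^{(4)}(1+|x|^4)$. (A8) every drift variable $U^{2s}$ at level $2s$ determines (measurably) two drift variables $U^{2s,1},U^{2s,2}$ at level $s$ with $b(x,U^{2s})=\frac12b(x,U^{2s,1})+\frac12b(x,U^{2s,2})$ for all $x$. *)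

theory Defs
  imports "HOL-Probability.Probability"
begin

definition pd :: "'i::finite \<Rightarrow> (real^'i \<Rightarrow> 'b::real_normed_vector) \<Rightarrow> real^'i \<Rightarrow> 'b" where
  "pd i f x = vector_derivative (\<lambda>t. f (x + t *\<^sub>R axis i 1)) (at 0)"

definition C2_bounded :: "(real^'i::finite \<Rightarrow> 'b::real_normed_vector) \<Rightarrow> real \<Rightarrow> real \<Rightarrow> bool" where
  "C2_bounded f C1 C2 \<longleftrightarrow>
     continuous_on UNIV f \<and>
     (\<forall>i x. (\<lambda>t. f (x + t *\<^sub>R axis i 1)) differentiable (at 0)) \<and>
     (\<forall>i. continuous_on UNIV (pd i f)) \<and>
     (\<forall>i j x. (\<lambda>t. pd i f (x + t *\<^sub>R axis j 1)) differentiable (at 0)) \<and>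
     (\<forall>i j. continuous_on UNIV (pd j (pd i f))) \<and>
     (\<forall>i x. norm (pd i f x) \<le> C1) \<and>
     (\<forall>i j x. norm (pd j (pd i f) x) \<le> C2)"

definition std_gauss_density :: "real^'d::finite \<Rightarrow> ennreal" where
  "std_gauss_density x = ennreal (\<Prod>i\<in>UNIV. std_normal_density (x $ i))"

datatype noise_idx = IX0 | IU nat | IZ nat

definition noise_index_set :: "noise_idx set" where
  "noise_index_set = {IX0} \<union> range IU \<union> IZ ` {1..}"

text \<open>Mutual independence of the whole family X_0, U_0, U_1, ..., Z_1, Z_2, ...
  (equivalently: the U_k are mutually independent, the Z_k are mutually independent,
  (U_k) is independent of (Z_k), and X_0 is independent of both).\<close>
definition joint_indep ::
  "'w measure \<Rightarrow> ('w \<Rightarrow> real^'d::finite) \<Rightarrow> (nat \<Rightarrow> 'w \<Rightarrow> real^'n::finite) \<Rightarrow> (nat \<Rightarrow> 'w \<Rightarrow> real^'d) \<Rightarrow> bool" where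
  "joint_indep M X0 U Z \<longleftrightarrow>
     prob_space.indep_sets M
       (\<lambda>i. case i of
              IX0 \<Rightarrow> {X0 -` A \<inter> space M | A. A \<in> sets borel}
            | IU k \<Rightarrow> {U k -` A \<inter> space M | A. A \<in> sets borel}
            | IZ k \<Rightarrow> {Z k -` A \<inter> space M | A. A \<in> sets borel})
       noise_index_set"

primrec euler_iter ::
  "real \<Rightarrow> real \<Rightarrow> (real^'d::finite \<Rightarrow> real^'n::finite \<Rightarrow> real^'d) \<Rightarrow> ('w \<Rightarrow> real^'d)
     \<Rightarrow> (nat \<Rightarrow> 'w \<Rightarrow> real^'n) \<Rightarrow> (nat \<Rightarrow> 'w \<Rightarrow> real^'d) \<Rightarrow> nat \<Rightarrow> 'w \<Rightarrow> real^'d" where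
  "euler_iter h \<beta> b X0 U Z 0 \<omega> = X0 \<omega>"
| "euler_iter h \<beta> b X0 U Z (Suc k) \<omega> =
     euler_iter h \<beta> b X0 U Z k \<omega> + h *\<^sub>R b (euler_iter h \<beta> b X0 U Z k \<omega>) (U k \<omega>)
     + (\<beta> * sqrt h) *\<^sub>R Z (Suc k) \<omega>"

end

theory Submission
  imports Defs
begin

(*
  A Lyapunov argument for V(x) = |x|^4.  Given X_k = y, the next iterate is v + W with the
  deterministic drift step v = y + h a(y) and the mean-zero noise
  W = h (b(y, U_k) - a(y)) + beta sqrt h Z_(k+1).  Expanding |v + W|^4 and using E W = 0 gives
  E |v + W|^4 <= |v|^4 + 8 |v|^2 E |W|^2 + 3 E |W|^4, where E |W|^2 = O(h + h^2 |y|^2) and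
  E |W|^4 = O(h^2 (1 + |y|^4)) uniformly in s, because (A4) bounds the fourth moment of the
  drift noise by kappa / s^2 <= kappa.  Strong monotonicity and the Lipschitz bound (A1) give
  |v|^2 <= (1 - K h) |y|^2 + O(h), so for small h the conditional fourth moment is at most
  (1 - K h / 2) |y|^4 + C h, and induction yields E |X_k|^4 <= E |X_0|^4 + 2 C / K.
  The conditioning is justified because X_k depends only on X_0, U_0 .. U_(k-1), Z_1 .. Z_k,
  which are independent of U_k and Z_(k+1).
*)

text \<open>The last term is linear in \<open>w\<close> and vanishes in expectation when \<open>w\<close> has mean zero.\<close>

lemma norm_add_pow4_le:
  fixes v w :: "'a::real_inner" and T :: real
  shows "norm (v + w) ^ 4 + T * (norm (v + w))\<^sup>2
    \<le> norm v ^ 4 + T * (norm v)\<^sup>2 + (8 * (norm v)\<^sup>2 + T) * (norm w)\<^sup>2 + 3 * norm w ^ 4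
       + (4 * (norm v)\<^sup>2 + 2 * T) * (v \<bullet> w)"
proof -
  define p q r where "p = (norm v)\<^sup>2" and "q = v \<bullet> w" and "r = (norm w)\<^sup>2"
  have sq: "(norm (v + w))\<^sup>2 = p + 2 * q + r"
    unfolding p_def q_def r_def by (simp add: power2_norm_eq_inner inner_add inner_commute)
  have cs: "q\<^sup>2 \<le> p * r"
    unfolding p_def q_def r_def using Cauchy_Schwarz_ineq[of v w]
    by (simp add: power2_norm_eq_inner)
  have "p\<^sup>2 + T * p + (8 * p + T) * r + 3 * r\<^sup>2 + (4 * p + 2 * T) * q
      - ((p + 2 * q + r)\<^sup>2 + T * (p + 2 * q + r)) = 6 * (p * r - q\<^sup>2) + 2 * (q - r)\<^sup>2"
    by algebra
  also have "\<dots> \<ge> 0" using cs by simp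
  finally have "(p + 2 * q + r)\<^sup>2 + T * (p + 2 * q + r)
      \<le> p\<^sup>2 + T * p + (8 * p + T) * r + 3 * r\<^sup>2 + (4 * p + 2 * T) * q"
    by simp
  moreover have "norm x ^ 4 = ((norm x)\<^sup>2)\<^sup>2" for x :: 'a by simp
  ultimately show ?thesis
    by (simp only: sq p_def q_def r_def)
qed

lemma power_le_one_plus_power:
  fixes x :: real
  assumes "0 \<le> x" "m \<le> n"
  shows "x ^ m \<le> 1 + x ^ n"
proof (cases "x \<le> 1")
  case True
  then have "x ^ m \<le> 1" using assms by (simp add: power_le_one)
  then show ?thesis using assms by (simp add: add_increasing2)
next
  case False
  then have "x ^ m \<le> x ^ n" using assms by (simp add: power_increasing)
  then show ?thesis by simp
qed

lemma sum_le_prod_one_plus: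
  fixes x :: "'i \<Rightarrow> real"
  assumes "\<And>i. i \<in> S \<Longrightarrow> 0 \<le> x i"
  shows "(\<Sum>i\<in>S. x i) \<le> (\<Prod>i\<in>S. 1 + x i)"
  using assms
proof (induction S rule: infinite_finite_induct)
  case (insert j S)
  have "1 \<le> (\<Prod>i\<in>S. 1 + x i)" using insert.prems by (intro prod_ge_1) auto
  then have "x j * 1 \<le> x j * (\<Prod>i\<in>S. 1 + x i)"
    using insert.prems by (intro mult_left_mono) auto
  with insert show ?case by (simp add: algebra_simps)
qed simp_all

lemma mult_le_weighted_squares:
  fixes K x y :: real
  assumes "0 < K"
  shows "x * y \<le> K / 4 * x\<^sup>2 + y\<^sup>2 / K"
proof -
  have "0 \<le> (K * x - 2 * y)\<^sup>2 / (4 * K)" using assms by simp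
  also have "(K * x - 2 * y)\<^sup>2 / (4 * K) = K / 4 * x\<^sup>2 + y\<^sup>2 / K - x * y"
    using assms by (simp add: field_simps power2_eq_square)
  finally show ?thesis by simp
qed

lemma contraction_absorb:
  fixes K A B h r P :: real
  assumes K: "0 < K" and h: "0 \<le> h" and r: "0 \<le> r" and B: "0 \<le> B" and hB: "8 * h * B \<le> K"
    and P: "P \<le> (1 - K * h) * r\<^sup>2 + h * A * (1 + r) + h\<^sup>2 * B * (1 + r)\<^sup>2"
  shows "P \<le> (1 - K * h / 2) * r\<^sup>2 + h * (A + A\<^sup>2 / K + K / 4)"
proof -
  have "(1 + r)\<^sup>2 \<le> 2 + 2 * r\<^sup>2"
    using sum_squares_ge_zero[of "r - 1" 0] by (simp add: power2_eq_square algebra_simps)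
  then have "h\<^sup>2 * B * (1 + r)\<^sup>2 \<le> h\<^sup>2 * B * (2 + 2 * r\<^sup>2)"
    using B by (intro mult_left_mono) auto
  also have "\<dots> = 2 * h * (h * B) * (1 + r\<^sup>2)"
    by (simp add: power2_eq_square algebra_simps)
  also have "\<dots> \<le> 2 * h * (K / 8) * (1 + r\<^sup>2)"
    using h hB by (intro mult_right_mono mult_left_mono) auto
  finally have quad: "h\<^sup>2 * B * (1 + r)\<^sup>2 \<le> h * (K / 4) + K * h / 4 * r\<^sup>2"
    by (simp add: algebra_simps)
  have "r * A \<le> K / 4 * r\<^sup>2 + A\<^sup>2 / K" by (rule mult_le_weighted_squares[OF K])
  then have lin: "h * A * (1 + r) \<le> h * A + K * h / 4 * r\<^sup>2 + h * (A\<^sup>2 / K)"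
    using mult_left_mono[OF _ h] by (fastforce simp: algebra_simps)
  show ?thesis using P quad lin by (simp add: algebra_simps)
qed

lemma square_contraction_le:
  fixes c A0 r h Q :: real
  assumes c: "0 \<le> c" "c \<le> 1" and A0: "0 \<le> A0" and r: "0 \<le> r" and h: "0 \<le> h"
    and Q: "0 \<le> Q" "Q \<le> c * r + h * A0"
  shows "Q\<^sup>2 \<le> c * r\<^sup>2 + h * (2 * A0 * (1 + r)) + h\<^sup>2 * (A0\<^sup>2 * (1 + r)\<^sup>2)"
proof -
  have cr: "c * r \<le> 1 + r" using c r by (simp add: mult_left_le_one_le add_increasing)
  have "Q\<^sup>2 \<le> (c * r + h * A0)\<^sup>2"
    using Q by (intro power_mono) auto
  also have "\<dots> = c\<^sup>2 * r\<^sup>2 + h * (2 * A0 * (c * r)) + h\<^sup>2 * A0\<^sup>2"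
    by (simp add: power2_eq_square algebra_simps)
  also have "\<dots> \<le> c * r\<^sup>2 + h * (2 * A0 * (1 + r)) + h\<^sup>2 * (A0\<^sup>2 * (1 + r)\<^sup>2)"
  proof (intro add_mono)
    show "c\<^sup>2 * r\<^sup>2 \<le> c * r\<^sup>2"
      using c by (intro mult_right_mono) (auto simp: power2_eq_square mult_left_le_one_le)
    show "h * (2 * A0 * (c * r)) \<le> h * (2 * A0 * (1 + r))"
      using cr h A0 by (intro mult_left_mono) auto
    have "1 \<le> (1 + r)\<^sup>2" using r by simp
    then show "h\<^sup>2 * A0\<^sup>2 \<le> h\<^sup>2 * (A0\<^sup>2 * (1 + r)\<^sup>2)"
      by (intro mult_left_mono) (auto simp: mult_le_cancel_left1)
  qed
  finally show ?thesis .
qed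

lemma quartic_step_bound:
  fixes K A0 k g2 g4 h r Q m2 m4 :: real
  defines "A \<equiv> 2 * A0 + g2 * (1 + A0)"
    and "B \<equiv> A0\<^sup>2 + g4 + (8 * (1 + A0) + g2 + 3) * k"
  assumes K: "0 < K" and A0: "0 \<le> A0" and k: "0 \<le> k" and g: "0 \<le> g2" "0 \<le> g4" and r: "0 \<le> r"
    and h: "0 \<le> h" "h \<le> 1" "K * h \<le> 1" "8 * h * B \<le> K"
    and Q: "0 \<le> Q" "Q \<le> (1 - K * h) * r + h * A0"
    and m: "0 \<le> m2" "m2 \<le> k * (1 + r)" "0 \<le> m4" "m4 \<le> k * (1 + r)\<^sup>2"
  shows "Q\<^sup>2 + h * g2 * Q + h\<^sup>2 * g4 + (8 * Q + h * g2) * h\<^sup>2 * m2 + 3 * h ^ 4 * m4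
    \<le> (1 - K * h / 2) * r\<^sup>2 + h * (A + A\<^sup>2 / K + K / 4)"
proof (rule contraction_absorb[OF K h(1) r _ h(4)])
  define \<rho> where "\<rho> = 1 + r"
  have \<rho>: "1 \<le> \<rho>" "r \<le> \<rho>" using r by (auto simp: \<rho>_def)
  have "1 \<le> \<rho>\<^sup>2" using \<rho> by simp
  have h4: "h ^ 4 \<le> h\<^sup>2" using power_decreasing[of 2 4 h] h by auto
  have Kh: "0 \<le> 1 - K * h" "1 - K * h \<le> 1" using h K by auto
  have Kr: "(1 - K * h) * r \<le> r" using Kh r by (simp add: mult_left_le_one_le)
  have "h * A0 \<le> A0" using h A0 by (simp add: mult_left_le_one_le)
  moreover have "A0 \<le> A0 * \<rho>" using A0 \<rho> by (simp add: mult_le_cancel_left1)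
  ultimately have Q\<rho>: "Q \<le> (1 + A0) * \<rho>"
    using Q(2) Kr \<rho> by (simp add: algebra_simps)
  have quad: "Q\<^sup>2 \<le> (1 - K * h) * r\<^sup>2 + h * (2 * A0 * \<rho>) + h\<^sup>2 * (A0\<^sup>2 * \<rho>\<^sup>2)"
    using square_contraction_le[OF Kh A0 r h(1) Q] unfolding \<rho>_def .
  have drift: "h * g2 * Q \<le> h * (g2 * (1 + A0) * \<rho>)"
    using Q\<rho> h g by (simp add: mult_left_mono mult.assoc)
  have gauss4: "h\<^sup>2 * g4 \<le> h\<^sup>2 * (g4 * \<rho>\<^sup>2)"
    using \<open>1 \<le> \<rho>\<^sup>2\<close> g by (intro mult_left_mono) (auto simp: mult_le_cancel_left1)
  have "(8 * Q + h * g2) * m2 \<le> ((8 * (1 + A0) + g2) * \<rho>) * (k * \<rho>)"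
  proof (rule mult_mono)
    have "h * g2 \<le> g2" using h g by (simp add: mult_left_le_one_le)
    also have "\<dots> \<le> g2 * \<rho>" using g \<rho> by (simp add: mult_le_cancel_left1)
    finally have "h * g2 \<le> g2 * \<rho>" .
    then show "8 * Q + h * g2 \<le> (8 * (1 + A0) + g2) * \<rho>"
      using Q\<rho> by (simp add: algebra_simps)
  qed (use m Q h g A0 \<rho> \<rho>_def in auto)
  then have "h\<^sup>2 * ((8 * Q + h * g2) * m2) \<le> h\<^sup>2 * (((8 * (1 + A0) + g2) * \<rho>) * (k * \<rho>))"
    by (rule mult_left_mono) simp
  then have cross: "(8 * Q + h * g2) * h\<^sup>2 * m2 \<le> h\<^sup>2 * ((8 * (1 + A0) + g2) * k * \<rho>\<^sup>2)"
    by (simp add: power2_eq_square mult_ac)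
  have "3 * h ^ 4 * m4 \<le> 3 * h\<^sup>2 * m4"
    using h4 m by (simp add: mult_right_mono)
  also have "\<dots> \<le> h\<^sup>2 * (3 * k * \<rho>\<^sup>2)"
    using m \<rho>_def by (simp add: mult_left_mono)
  finally have quart: "3 * h ^ 4 * m4 \<le> h\<^sup>2 * (3 * k * \<rho>\<^sup>2)" .
  have "h * (2 * A0 * \<rho>) + h * (g2 * (1 + A0) * \<rho>) = h * A * \<rho>"
    unfolding A_def by (simp add: algebra_simps)
  moreover have "h\<^sup>2 * (A0\<^sup>2 * \<rho>\<^sup>2) + h\<^sup>2 * (g4 * \<rho>\<^sup>2) + h\<^sup>2 * ((8 * (1 + A0) + g2) * k * \<rho>\<^sup>2)
      + h\<^sup>2 * (3 * k * \<rho>\<^sup>2) = h\<^sup>2 * B * \<rho>\<^sup>2"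
    unfolding B_def by (simp add: algebra_simps)
  ultimately show "Q\<^sup>2 + h * g2 * Q + h\<^sup>2 * g4 + (8 * Q + h * g2) * h\<^sup>2 * m2 + 3 * h ^ 4 * m4
    \<le> (1 - K * h) * r\<^sup>2 + h * A * (1 + r) + h\<^sup>2 * B * (1 + r)\<^sup>2"
    using quad drift gauss4 cross quart unfolding \<rho>_def by linarith
  show "0 \<le> B" unfolding B_def using A0 g k by simp
qed

lemma norm_drift_step_le:
  fixes a :: "'a::real_inner \<Rightarrow> 'a" and y :: 'a
  assumes K: "0 < K" and L: "0 \<le> L"
    and mono: "y \<bullet> (a y - a 0) \<le> - K * (norm y)\<^sup>2"
    and lip: "norm (a y - a 0) \<le> L * norm y"
    and h: "0 \<le> h" "h \<le> 1" "4 * L\<^sup>2 * h \<le> K"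
  shows "(norm (y + h *\<^sub>R a y))\<^sup>2
    \<le> (1 - K * h) * (norm y)\<^sup>2 + h * (2 * (norm (a 0))\<^sup>2 / K + 2 * (norm (a 0))\<^sup>2)"
proof -
  define n m where "n = norm y" and "m = norm (a 0)"
  have "y \<bullet> a y = y \<bullet> (a y - a 0) + y \<bullet> a 0" by (simp add: inner_diff_right)
  also have "\<dots> \<le> - K * n\<^sup>2 + n * m"
    using mono norm_cauchy_schwarz[of y "a 0"] by (simp add: n_def m_def)
  finally have inner: "y \<bullet> a y \<le> - K * n\<^sup>2 + n * m" .
  have "norm (a y) \<le> m + L * n"
    using norm_triangle_ineq[of "a y - a 0" "a 0"] lip by (simp add: n_def m_def)
  then have "(norm (a y))\<^sup>2 \<le> (m + L * n)\<^sup>2" by (intro power_mono) auto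
  also have "\<dots> \<le> 2 * m\<^sup>2 + 2 * L\<^sup>2 * n\<^sup>2"
    using sum_squares_ge_zero[of "m - L * n" 0] by (simp add: power2_eq_square algebra_simps)
  finally have ay: "h\<^sup>2 * (norm (a y))\<^sup>2 \<le> h\<^sup>2 * (2 * m\<^sup>2 + 2 * L\<^sup>2 * n\<^sup>2)"
    by (intro mult_left_mono) auto
  have "h\<^sup>2 * (2 * L\<^sup>2 * n\<^sup>2) \<le> h * (K / 2 * n\<^sup>2)"
    using mult_right_mono[OF h(3), of "h * n\<^sup>2 / 2"] h by (simp add: power2_eq_square algebra_simps)
  moreover have "h\<^sup>2 * (2 * m\<^sup>2) \<le> h * (2 * m\<^sup>2)"
    using power_decreasing[of 1 2 h] h by (intro mult_right_mono) auto
  moreover have "h * (2 * (n * m)) \<le> h * (K / 2 * n\<^sup>2 + 2 * m\<^sup>2 / K)"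
    using mult_le_weighted_squares[OF K, of n m] h by (intro mult_left_mono) auto
  moreover have "h * (2 * (y \<bullet> a y)) \<le> h * (2 * (- K * n\<^sup>2 + n * m))"
    using inner h by (intro mult_left_mono) auto
  moreover have "(norm (y + h *\<^sub>R a y))\<^sup>2 = n\<^sup>2 + h * (2 * (y \<bullet> a y)) + h\<^sup>2 * (norm (a y))\<^sup>2"
    unfolding n_def power2_norm_eq_inner
    by (simp add: inner_commute power2_eq_square algebra_simps)
  ultimately show ?thesis
    using ay unfolding n_def[symmetric] m_def[symmetric] by (simp add: algebra_simps)
qed

section \<open>Fourth moments of mean-zero perturbations\<close>

lemma (in prob_space) integrable_norm_power_mono:
  fixes W :: "'a \<Rightarrow> 'b::{banach, second_countable_topology}"
  assumes "integrable M (\<lambda>u. norm (W u) ^ n)" "W \<in> borel_measurable M" "m \<le> n"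
  shows "integrable M (\<lambda>u. norm (W u) ^ m)"
proof (rule Bochner_Integration.integrable_bound)
  show "integrable M (\<lambda>u. 1 + norm (W u) ^ n)" using assms(1) by simp
  show "AE u in M. norm (norm (W u) ^ m) \<le> norm (1 + norm (W u) ^ n)"
    using assms(3) by (auto intro!: power_le_one_plus_power)
qed (use assms(2) in measurable)

lemma nn_integral_norm_add_pow4_le:
  fixes W :: "'u \<Rightarrow> 'a::euclidean_space" and v :: 'a and T :: real
  assumes P: "prob_space P" and W: "integrable P W" "integral\<^sup>L P W = 0"
    and W4: "integrable P (\<lambda>u. norm (W u) ^ 4)" and T: "0 \<le> T"
  shows "(\<integral>\<^sup>+ u. ennreal (norm (v + W u) ^ 4 + T * (norm (v + W u))\<^sup>2) \<partial>P)
    \<le> ennreal (norm v ^ 4 + T * (norm v)\<^sup>2 + (8 * (norm v)\<^sup>2 + T) * (\<integral>u. (norm (W u))\<^sup>2 \<partial>P)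
               + 3 * (\<integral>u. norm (W u) ^ 4 \<partial>P))"
proof -
  interpret prob_space P by fact
  have W2: "integrable P (\<lambda>u. (norm (W u))\<^sup>2)"
    using integrable_norm_power_mono[OF W4 borel_measurable_integrable[OF W(1)]] by simp
  define G where "G u = norm v ^ 4 + T * (norm v)\<^sup>2 + (8 * (norm v)\<^sup>2 + T) * (norm (W u))\<^sup>2
    + 3 * norm (W u) ^ 4 + (4 * (norm v)\<^sup>2 + 2 * T) * (v \<bullet> W u)" for u
  have G: "integrable P G"
    unfolding G_def using W W2 W4
    by (intro integrable_inner_right Bochner_Integration.integrable_add
        Bochner_Integration.integrable_mult_right integrable_const) auto
  have "(\<integral>\<^sup>+ u. ennreal (norm (v + W u) ^ 4 + T * (norm (v + W u))\<^sup>2) \<partial>P) \<le> (\<integral>\<^sup>+ u. ennreal (G u) \<partial>P)"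
    unfolding G_def by (intro nn_integral_mono ennreal_leI norm_add_pow4_le)
  also have "\<dots> = ennreal (\<integral>u. G u \<partial>P)"
  proof (intro nn_integral_eq_integral AE_I2 G)
    fix u
    have "0 \<le> norm (v + W u) ^ 4 + T * (norm (v + W u))\<^sup>2" using T by simp
    then show "0 \<le> G u" unfolding G_def using norm_add_pow4_le[of v "W u" T] by linarith
  qed
  also have "(\<integral>u. G u \<partial>P) = norm v ^ 4 + T * (norm v)\<^sup>2
      + (8 * (norm v)\<^sup>2 + T) * (\<integral>u. (norm (W u))\<^sup>2 \<partial>P)
               + 3 * (\<integral>u. norm (W u) ^ 4 \<partial>P)"
    unfolding G_def using W W2 W4 by (simp add: prob_space)
  finally show ?thesis .
qed

lemma drift_noise_moments:
  fixes D :: "'u \<Rightarrow> 'a::euclidean_space" and k r :: real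
  assumes P: "prob_space P" and D: "D \<in> borel_measurable P" and k: "0 \<le> k" and r: "0 \<le> r"
    and D4: "(\<integral>\<^sup>+ u. ennreal (norm (D u) ^ 4) \<partial>P) \<le> ennreal (k * (1 + r\<^sup>2))"
  shows "integrable P (\<lambda>u. norm (D u) ^ 4)"
    and "(\<integral>u. norm (D u) ^ 4 \<partial>P) \<le> (k + 1) * (1 + r)\<^sup>2"
    and "(\<integral>u. (norm (D u))\<^sup>2 \<partial>P) \<le> (k + 1) * (1 + r)"
proof -
  interpret prob_space P by fact
  show D4i: "integrable P (\<lambda>u. norm (D u) ^ 4)"
    using D4 D by (intro integrableI_nonneg) (auto simp: le_less_trans[OF _ ennreal_less_top])
  define \<rho> where "\<rho> = 1 + r"
  have \<rho>: "1 \<le> \<rho>" "1 + r\<^sup>2 \<le> \<rho>\<^sup>2" using r by (auto simp: \<rho>_def power2_eq_square algebra_simps)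
  have "ennreal (\<integral>u. norm (D u) ^ 4 \<partial>P) = (\<integral>\<^sup>+ u. ennreal (norm (D u) ^ 4) \<partial>P)"
    using D4i by (intro nn_integral_eq_integral[symmetric]) auto
  with D4 have "ennreal (\<integral>u. norm (D u) ^ 4 \<partial>P) \<le> ennreal (k * (1 + r\<^sup>2))" by simp
  then have "(\<integral>u. norm (D u) ^ 4 \<partial>P) \<le> k * (1 + r\<^sup>2)"
    using k by (subst (asm) ennreal_le_iff) auto
  also have "\<dots> \<le> k * \<rho>\<^sup>2" using k \<rho> by (intro mult_left_mono)
  finally have m4: "(\<integral>u. norm (D u) ^ 4 \<partial>P) \<le> k * \<rho>\<^sup>2" .
  moreover have "k * \<rho>\<^sup>2 \<le> (k + 1) * \<rho>\<^sup>2" by (simp add: distrib_right)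
  ultimately show "(\<integral>u. norm (D u) ^ 4 \<partial>P) \<le> (k + 1) * (1 + r)\<^sup>2"
    unfolding \<rho>_def by linarith
  \<comment> \<open>the weight \<open>\<rho>\<close> keeps the second moment linear in \<open>r\<close>\<close>
  have "1 * (norm (D u))\<^sup>2 \<le> (2 * \<rho>) / 4 * 1\<^sup>2 + ((norm (D u))\<^sup>2)\<^sup>2 / (2 * \<rho>)" for u
    using \<rho> by (intro mult_le_weighted_squares) auto
  then have "(\<integral>u. (norm (D u))\<^sup>2 \<partial>P) \<le> (\<integral>u. \<rho> / 2 + norm (D u) ^ 4 / (2 * \<rho>) \<partial>P)"
    using D4i integrable_norm_power_mono[OF D4i D, of 2]
    by (intro integral_mono) (auto simp: field_simps)
  also have "\<dots> = \<rho> / 2 + (\<integral>u. norm (D u) ^ 4 \<partial>P) / (2 * \<rho>)"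
    using D4i by (simp add: prob_space)
  also have "\<dots> \<le> \<rho> / 2 + k * \<rho>\<^sup>2 / (2 * \<rho>)"
    using m4 \<rho> by (intro add_left_mono divide_right_mono) auto
  also have "\<dots> \<le> (k + 1) * (1 + r)"
    using \<rho> k by (simp add: \<rho>_def power2_eq_square field_simps)
  finally show "(\<integral>u. (norm (D u))\<^sup>2 \<partial>P) \<le> (k + 1) * (1 + r)" .
qed

section \<open>The standard Gaussian measure\<close>

abbreviation std_gauss :: "(real^'d::finite) measure" where
  "std_gauss \<equiv> density lborel std_gauss_density"

lemma std_gauss_density_uminus: "std_gauss_density (- z) = std_gauss_density (z :: real^'d::finite)"
  unfolding std_gauss_density_def by (simp add: std_normal_density_def)

lemma borel_measurable_std_gauss_density[measurable]:
  "(std_gauss_density :: real^'d::finite \<Rightarrow> ennreal) \<in> borel_measurable borel"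
  unfolding std_gauss_density_def by measurable

lemma prod_Basis_vec: "(\<Prod>b\<in>(Basis :: (real^'d::finite) set). f (z \<bullet> b)) = (\<Prod>i\<in>UNIV. f (z $ i))"
proof -
  have inj: "inj (\<lambda>i::'d. axis i (1::real))"
    by (auto simp: inj_def axis_eq_axis)
  have B: "(Basis :: (real^'d) set) = (\<lambda>i. axis i 1) ` UNIV"
    unfolding Basis_vec_def by auto
  show ?thesis unfolding B by (subst prod.reindex[OF inj]) (simp add: inner_axis)
qed

lemma nn_integral_std_gauss_prod:
  fixes f :: "real \<Rightarrow> ennreal"
  assumes [measurable]: "f \<in> borel_measurable borel"
  shows "(\<integral>\<^sup>+ z. (\<Prod>i\<in>UNIV. f (z $ i)) \<partial>(std_gauss :: (real^'d::finite) measure))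
    = (\<integral>\<^sup>+ t. ennreal (std_normal_density t) * f t \<partial>lborel) ^ CARD('d)"
proof -
  have "(\<integral>\<^sup>+ z. (\<Prod>i\<in>UNIV. f (z $ i)) \<partial>(std_gauss :: (real^'d) measure))
      = (\<integral>\<^sup>+ z. (\<Prod>b\<in>Basis. ennreal (std_normal_density ((z :: real^'d) \<bullet> b)) * f (z \<bullet> b)) \<partial>lborel)"
    by (subst nn_integral_density)
       (simp_all add: std_gauss_density_def prod.distrib prod_ennreal[symmetric]
         prod_Basis_vec[of "\<lambda>t. ennreal (std_normal_density t)"] prod_Basis_vec[of f])
  also have "\<dots> = (\<Prod>b\<in>(Basis :: (real^'d) set). \<integral>\<^sup>+ t. ennreal (std_normal_density t) * f t \<partial>lborel)"
    by (rule nn_integral_lborel_prod) auto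
  finally show ?thesis by simp
qed

lemma prob_space_std_gauss: "prob_space (std_gauss :: (real^'d::finite) measure)"
proof
  have "(\<integral>\<^sup>+ t. ennreal (std_normal_density t) \<partial>lborel) = 1"
    by (subst nn_integral_eq_integral) auto
  then show "emeasure (std_gauss :: (real^'d) measure) (space std_gauss) = 1"
    using nn_integral_std_gauss_prod[where f = "\<lambda>_. 1" and 'd = 'd]
    by (simp add: emeasure_density)
qed

lemma integrable_std_gauss_norm_pow4:
  "integrable (std_gauss :: (real^'d::finite) measure) (\<lambda>z. norm z ^ 4)"
proof (rule integrableI_nonneg)
  have norm_le: "(norm z)\<^sup>2 \<le> (\<Prod>i\<in>UNIV. 1 + (z $ i)\<^sup>2)" for z :: "real^'d"
    using sum_le_prod_one_plus[of UNIV "\<lambda>i. (z $ i)\<^sup>2"]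
    unfolding power2_norm_eq_inner inner_vec_def by (simp add: power2_eq_square)
  have "(\<integral>\<^sup>+ z. ennreal (norm z ^ 4) \<partial>(std_gauss :: (real^'d) measure))
      \<le> (\<integral>\<^sup>+ z. (\<Prod>i\<in>UNIV. ennreal ((1 + ((z :: real^'d) $ i)\<^sup>2)\<^sup>2)) \<partial>std_gauss)"
  proof (intro nn_integral_mono)
    fix z :: "real^'d"
    have "norm z ^ 4 \<le> (\<Prod>i\<in>UNIV. (1 + (z $ i)\<^sup>2)\<^sup>2)"
      using power_mono[OF norm_le[of z], of 2] by (simp add: prod_power_distrib)
    then show "ennreal (norm z ^ 4) \<le> (\<Prod>i\<in>UNIV. ennreal ((1 + (z $ i)\<^sup>2)\<^sup>2))"
      by (simp add: prod_ennreal ennreal_leI)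
  qed
  also have "\<dots> = (\<integral>\<^sup>+ t. ennreal (std_normal_density t * (1 + t\<^sup>2)\<^sup>2) \<partial>lborel) ^ CARD('d)"
    by (subst nn_integral_std_gauss_prod) (auto simp: ennreal_mult)
  also have "\<dots> < \<infinity>"
  proof -
    have "integrable lborel (\<lambda>t. std_normal_density t * t ^ 0 + 2 * (std_normal_density t * t ^ 2)
        + std_normal_density t * t ^ 4)"
      by (intro Bochner_Integration.integrable_add Bochner_Integration.integrable_mult_right
          integrable_std_normal_moment)
    moreover have "std_normal_density t * t ^ 0 + 2 * (std_normal_density t * t ^ 2)
        + std_normal_density t * t ^ 4 = std_normal_density t * (1 + t\<^sup>2)\<^sup>2" for t
      by (simp add: power2_eq_square algebra_simps power4_eq_xxxx)
    ultimately have "integrable lborel (\<lambda>t. std_normal_density t * (1 + t\<^sup>2)\<^sup>2)"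
      by simp
    then show ?thesis
      by (subst nn_integral_eq_integral) (auto simp: power_less_top_ennreal)
  qed
  finally show "(\<integral>\<^sup>+ z. ennreal (norm z ^ 4) \<partial>(std_gauss :: (real^'d) measure)) < \<infinity>" .
qed auto

lemma distr_std_gauss_uminus:
  "distr std_gauss borel uminus = (std_gauss :: (real^'d::finite) measure)"
proof -
  have "distr lborel borel uminus = (lborel :: (real^'d) measure)"
    by (subst lborel_affine[of "-1" 0]) (auto simp: density_1 one_ennreal_def[symmetric])
  then show ?thesis
    using density_distr[of std_gauss_density borel uminus "lborel :: (real^'d) measure"]
    by (simp add: std_gauss_density_uminus)
qed

lemma std_gauss_mean_zero:
  "integrable (std_gauss :: (real^'d::finite) measure) (\<lambda>z. z)"
  "(\<integral>z. z \<partial>(std_gauss :: (real^'d::finite) measure)) = 0"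
proof -
  interpret prob_space "std_gauss :: (real^'d) measure" by (rule prob_space_std_gauss)
  have "integrable std_gauss (\<lambda>z::real^'d. norm z ^ 1)"
    by (rule integrable_norm_power_mono[OF integrable_std_gauss_norm_pow4]) auto
  then show int: "integrable (std_gauss :: (real^'d) measure) (\<lambda>z. z)"
    by (simp add: integrable_norm_iff)
  have "(\<integral>z. z \<partial>(std_gauss :: (real^'d) measure)) = (\<integral>z. - z \<partial>std_gauss)"
    by (subst (1) distr_std_gauss_uminus[symmetric]) (simp add: integral_distr)
  then have "2 *\<^sub>R (\<integral>z. z \<partial>(std_gauss :: (real^'d) measure)) = 0"
    by (simp add: scaleR_2)
  then show "(\<integral>z. z \<partial>(std_gauss :: (real^'d) measure)) = 0"
    by simp
qed

lemma nn_integral_std_gauss_shift_pow4_le: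
  fixes w :: "real^'d::finite" and c :: real
  shows "(\<integral>\<^sup>+ z. ennreal (norm (w + c *\<^sub>R z) ^ 4) \<partial>std_gauss)
    \<le> ennreal (norm w ^ 4 + 8 * c\<^sup>2 * (\<integral>z. (norm (z :: real^'d))\<^sup>2 \<partial>std_gauss) * (norm w)\<^sup>2
               + 3 * c ^ 4 * (\<integral>z. norm (z :: real^'d) ^ 4 \<partial>std_gauss))"
proof -
  have "(\<integral>\<^sup>+ z. ennreal (norm (w + c *\<^sub>R z) ^ 4 + 0 * (norm (w + c *\<^sub>R z))\<^sup>2) \<partial>std_gauss)
    \<le> ennreal (norm w ^ 4 + 0 * (norm w)\<^sup>2
          + (8 * (norm w)\<^sup>2 + 0) * (\<integral>z. (norm (c *\<^sub>R (z :: real^'d)))\<^sup>2 \<partial>std_gauss)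
               + 3 * (\<integral>z. norm (c *\<^sub>R (z :: real^'d)) ^ 4 \<partial>std_gauss))"
    using std_gauss_mean_zero integrable_std_gauss_norm_pow4
    by (intro nn_integral_norm_add_pow4_le[where W = "\<lambda>z. c *\<^sub>R z"] prob_space_std_gauss)
       (auto simp: power_mult_distrib)
  then show ?thesis
    by (simp add: algebra_simps)
qed

section \<open>One step of the scheme\<close>

lemma nn_integral_euler_step_le:
  fixes D :: "'u \<Rightarrow> real^'d::finite" and v :: "real^'d" and h \<beta> :: real
  defines "g2 \<equiv> 8 * \<beta>\<^sup>2 * (\<integral>z. (norm (z :: real^'d))\<^sup>2 \<partial>std_gauss)"
    and "g4 \<equiv> 3 * \<beta> ^ 4 * (\<integral>z. norm (z :: real^'d) ^ 4 \<partial>std_gauss)"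
  assumes P: "prob_space P" and D: "integrable P D" "integral\<^sup>L P D = 0"
    and D4: "integrable P (\<lambda>u. norm (D u) ^ 4)" and h: "0 \<le> h"
  shows "(\<integral>\<^sup>+ u. \<integral>\<^sup>+ z. ennreal (norm (v + h *\<^sub>R D u + (\<beta> * sqrt h) *\<^sub>R z) ^ 4) \<partial>std_gauss \<partial>P)
    \<le> ennreal (((norm v)\<^sup>2)\<^sup>2 + h * g2 * (norm v)\<^sup>2 + h\<^sup>2 * g4
       + (8 * (norm v)\<^sup>2 + h * g2) * h\<^sup>2 * (\<integral>u. (norm (D u))\<^sup>2 \<partial>P)
       + 3 * h ^ 4 * (\<integral>u. norm (D u) ^ 4 \<partial>P))"
proof -
  interpret prob_space P by fact
  have g: "0 \<le> g2" "0 \<le> g4"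
    unfolding g2_def g4_def by (auto intro!: mult_nonneg_nonneg integral_nonneg_AE)
  have "sqrt h ^ 4 = (sqrt h ^ 2) ^ 2" by (simp flip: power_mult)
  then have c: "(sqrt h)\<^sup>2 = h" "sqrt h ^ 4 = h\<^sup>2" using h by simp_all
  have "(\<integral>\<^sup>+ u. \<integral>\<^sup>+ z. ennreal (norm (v + h *\<^sub>R D u + (\<beta> * sqrt h) *\<^sub>R z) ^ 4) \<partial>std_gauss \<partial>P)
      \<le> (\<integral>\<^sup>+ u. ennreal (norm (v + h *\<^sub>R D u) ^ 4 + h * g2 * (norm (v + h *\<^sub>R D u))\<^sup>2)
          + ennreal (h\<^sup>2 * g4) \<partial>P)"
  proof (intro nn_integral_mono)
    fix u
    show "(\<integral>\<^sup>+ z. ennreal (norm (v + h *\<^sub>R D u + (\<beta> * sqrt h) *\<^sub>R z) ^ 4) \<partial>std_gauss)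
      \<le> ennreal (norm (v + h *\<^sub>R D u) ^ 4 + h * g2 * (norm (v + h *\<^sub>R D u))\<^sup>2) + ennreal (h\<^sup>2 * g4)"
      using nn_integral_std_gauss_shift_pow4_le[of "v + h *\<^sub>R D u" "\<beta> * sqrt h"] g h
      by (simp add: c g2_def g4_def ennreal_plus[symmetric] algebra_simps del: ennreal_plus)
  qed
  also have "\<dots> = (\<integral>\<^sup>+ u. ennreal (norm (v + h *\<^sub>R D u) ^ 4 + h * g2 * (norm (v + h *\<^sub>R D u))\<^sup>2) \<partial>P)
      + ennreal (h\<^sup>2 * g4)"
    using D by (subst nn_integral_add) (auto simp: emeasure_space_1)
  also have "(\<integral>\<^sup>+ u. ennreal (norm (v + h *\<^sub>R D u) ^ 4 + h * g2 * (norm (v + h *\<^sub>R D u))\<^sup>2) \<partial>P)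
      \<le> ennreal (norm v ^ 4 + h * g2 * (norm v)\<^sup>2
          + (8 * (norm v)\<^sup>2 + h * g2) * (\<integral>u. (norm (h *\<^sub>R D u))\<^sup>2 \<partial>P)
          + 3 * (\<integral>u. norm (h *\<^sub>R D u) ^ 4 \<partial>P))"
    using D D4 g h by (intro nn_integral_norm_add_pow4_le[OF P]) (auto simp: power_mult_distrib)
  finally show ?thesis
    using g h by (simp add: ennreal_plus[symmetric] algebra_simps del: ennreal_plus)
qed

lemma eventually_at_right_0_mult_le:
  fixes c d :: real
  assumes "0 < d"
  shows "\<forall>\<^sub>F h in at_right 0. c * h \<le> d"
proof -
  have "((\<lambda>h. c * h) \<longlongrightarrow> c * 0) (at_right 0)"
    by (intro tendsto_intros)
  then have "\<forall>\<^sub>F h in at_right 0. c * h < d"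
    using order_tendstoD(2) assms by simp
  then show ?thesis by (rule eventually_mono) simp
qed

text \<open>\<open>Lw\<close> is a law of drift variables: \<open>b x U\<close> is unbiased for \<open>a x\<close> and satisfies (A4)
  with the constant \<open>k\<close> in place of \<open>\<sigma>4 s\<close>.\<close>

definition drift_law :: "('a::euclidean_space \<Rightarrow> 'a) \<Rightarrow> ('a \<Rightarrow> 'u \<Rightarrow> 'a) \<Rightarrow> real \<Rightarrow> 'u measure \<Rightarrow> bool"
  where "drift_law a b k Lw \<longleftrightarrow> prob_space Lw \<and>
    (\<forall>y. integrable Lw (b y) \<and> (\<integral>u. b y u \<partial>Lw) = a y \<and>
         (\<integral>\<^sup>+ u. ennreal (norm (b y u - a y) ^ 4) \<partial>Lw) \<le> ennreal (k * (1 + norm y ^ 4)))"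

lemma drift_law_of_moment_bound:
  fixes a :: "'a::euclidean_space \<Rightarrow> 'a" and \<sigma> \<kappa> :: real and s :: nat
  assumes "prob_space Lw" "\<And>y. integrable Lw (b y) \<and> (\<integral>u. b y u \<partial>Lw) = a y"
    and "\<And>y. (\<integral>\<^sup>+ u. ennreal (norm (b y u - a y) ^ 4) \<partial>Lw) \<le> ennreal (\<sigma> * (1 + norm y ^ 4))"
    and \<sigma>: "\<sigma> \<le> \<kappa> / (real s)\<^sup>2" and s: "1 \<le> s"
  shows "drift_law a b (max \<kappa> 0) Lw"
proof -
  have "1 \<le> (real s)\<^sup>2" using s by simp
  have "\<sigma> \<le> max \<kappa> 0 / (real s)\<^sup>2" using \<sigma> by (rule order_trans) (intro divide_right_mono, auto)
  also have "\<dots> \<le> max \<kappa> 0"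
    using \<open>1 \<le> (real s)\<^sup>2\<close> by (simp add: divide_le_eq mult_le_cancel_left1)
  finally have "ennreal (\<sigma> * (1 + norm y ^ 4)) \<le> ennreal (max \<kappa> 0 * (1 + norm y ^ 4))" for y
    by (intro ennreal_leI mult_right_mono) auto
  then show ?thesis
    using assms unfolding drift_law_def by (blast intro: order_trans)
qed

lemma euler_step_contraction:
  fixes a :: "real^'d::finite \<Rightarrow> real^'d" and b :: "real^'d \<Rightarrow> 'u \<Rightarrow> real^'d" and K L k \<beta> :: real
  assumes K: "0 < K" and L: "0 \<le> L" and k: "0 \<le> k"
    and mono: "\<And>y. y \<bullet> (a y - a 0) \<le> - K * (norm y)\<^sup>2"
    and lip: "\<And>y. norm (a y - a 0) \<le> L * norm y"
  shows "\<exists>h0>0. \<exists>C\<ge>0. \<forall>h. 0 < h \<and> h < h0 \<longrightarrow> K * h \<le> 1 \<and>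
    (\<forall>Lw y. drift_law a b k Lw \<longrightarrow>
       (\<integral>\<^sup>+ u. \<integral>\<^sup>+ z. ennreal (norm (y + h *\<^sub>R b y u + (\<beta> * sqrt h) *\<^sub>R z) ^ 4) \<partial>std_gauss \<partial>Lw)
         \<le> ennreal ((1 - K * h / 2) * norm y ^ 4 + h * C))"
proof -
  define g2 where "g2 = 8 * \<beta>\<^sup>2 * (\<integral>z. (norm (z :: real^'d))\<^sup>2 \<partial>std_gauss)"
  define g4 where "g4 = 3 * \<beta> ^ 4 * (\<integral>z. norm (z :: real^'d) ^ 4 \<partial>std_gauss)"
  define A0 where "A0 = 2 * (norm (a 0))\<^sup>2 / K + 2 * (norm (a 0))\<^sup>2"
  define A where "A = 2 * A0 + g2 * (1 + A0)"
  define B where "B = A0\<^sup>2 + g4 + (8 * (1 + A0) + g2 + 3) * (k + 1)"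
  have g: "0 \<le> g2" "0 \<le> g4"
    unfolding g2_def g4_def by (auto intro!: mult_nonneg_nonneg integral_nonneg_AE)
  have A0: "0 \<le> A0" unfolding A0_def using K by simp
  have "\<forall>\<^sub>F h in at_right 0. 1 * h \<le> 1 \<and> K * h \<le> 1 \<and> (4 * L\<^sup>2) * h \<le> K \<and> (8 * B) * h \<le> K"
    using K by (intro eventually_conj eventually_at_right_0_mult_le) auto
  then obtain h0 where h0: "0 < h0"
    and small: "\<And>h. 0 < h \<Longrightarrow> h < h0 \<Longrightarrow> h \<le> 1 \<and> K * h \<le> 1 \<and> 4 * L\<^sup>2 * h \<le> K \<and> 8 * h * B \<le> K"
    unfolding eventually_at_right_field by (auto simp: mult_ac)
  have step: "(\<integral>\<^sup>+ u. \<integral>\<^sup>+ z. ennreal (norm (y + h *\<^sub>R b y u + (\<beta> * sqrt h) *\<^sub>R z) ^ 4) \<partial>std_gauss \<partial>Lw)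
      \<le> ennreal ((1 - K * h / 2) * norm y ^ 4 + h * (A + A\<^sup>2 / K + K / 4))"
    if h: "0 < h" "h < h0" and "drift_law a b k Lw" for h Lw y
  proof -
    have Lw: "prob_space Lw" and b: "integrable Lw (b y)" "(\<integral>u. b y u \<partial>Lw) = a y"
      and b4: "(\<integral>\<^sup>+ u. ennreal (norm (b y u - a y) ^ 4) \<partial>Lw) \<le> ennreal (k * (1 + norm y ^ 4))"
      using that(3) unfolding drift_law_def by auto
    interpret prob_space Lw by fact
    define D where "D u = b y u - a y" for u
    have D: "integrable Lw D" "integral\<^sup>L Lw D = 0"
      unfolding D_def using b by (auto simp: prob_space)
    have r: "0 \<le> (norm y)\<^sup>2" by simp
    note moments = drift_noise_moments[OF Lw borel_measurable_integrable[OF D(1)] k r]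
    have D4: "(\<integral>\<^sup>+ u. ennreal (norm (D u) ^ 4) \<partial>Lw) \<le> ennreal (k * (1 + ((norm y)\<^sup>2)\<^sup>2))"
      using b4 by (simp add: D_def flip: power_mult)
    have Q: "(norm (y + h *\<^sub>R a y))\<^sup>2 \<le> (1 - K * h) * (norm y)\<^sup>2 + h * A0"
      unfolding A0_def using norm_drift_step_le[OF K L mono[of y] lip[of y]] h small[OF h] by simp
    have split: "y + h *\<^sub>R b y u = (y + h *\<^sub>R a y) + h *\<^sub>R D u" for u
      by (simp add: D_def algebra_simps)
    have "(\<integral>\<^sup>+ u. \<integral>\<^sup>+ z. ennreal (norm (y + h *\<^sub>R b y u + (\<beta> * sqrt h) *\<^sub>R z) ^ 4) \<partial>std_gauss \<partial>Lw)
      \<le> ennreal (((norm (y + h *\<^sub>R a y))\<^sup>2)\<^sup>2 + h * g2 * (norm (y + h *\<^sub>R a y))\<^sup>2 + h\<^sup>2 * g4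
          + (8 * (norm (y + h *\<^sub>R a y))\<^sup>2 + h * g2) * h\<^sup>2 * (\<integral>u. (norm (D u))\<^sup>2 \<partial>Lw)
          + 3 * h ^ 4 * (\<integral>u. norm (D u) ^ 4 \<partial>Lw))"
      unfolding split g2_def g4_def
      by (rule nn_integral_euler_step_le[OF Lw D moments(1)[OF D4]]) (use h in simp)
    also have "\<dots> \<le> ennreal ((1 - K * h / 2) * ((norm y)\<^sup>2)\<^sup>2 + h * (A + A\<^sup>2 / K + K / 4))"
      unfolding A_def using small[OF h] h moments[OF D4] Q A0 g k K
      by (intro ennreal_leI quartic_step_bound[where k = "k + 1"])
         (auto simp: B_def intro!: integral_nonneg_AE)
    finally show ?thesis by (simp flip: power_mult)
  qed
  have "0 \<le> A + A\<^sup>2 / K + K / 4" unfolding A_def using A0 g K by simp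
  with h0 small step show ?thesis by blast
qed

section \<open>Independence\<close>

lemma (in prob_space) distr_pair_eq_pair_measure:
  assumes X: "random_variable S X" and Y: "random_variable T Y"
    and indep: "\<And>A B. A \<in> sets S \<Longrightarrow> B \<in> sets T \<Longrightarrow>
      prob (X -` A \<inter> Y -` B \<inter> space M) = prob (X -` A \<inter> space M) * prob (Y -` B \<inter> space M)"
  shows "distr M (S \<Otimes>\<^sub>M T) (\<lambda>\<omega>. (X \<omega>, Y \<omega>)) = distr M S X \<Otimes>\<^sub>M distr M T Y"
proof -
  interpret X: prob_space "distr M S X" by (rule prob_space_distr[OF X])
  interpret Y: prob_space "distr M T Y" by (rule prob_space_distr[OF Y])
  have XY: "random_variable (S \<Otimes>\<^sub>M T) (\<lambda>\<omega>. (X \<omega>, Y \<omega>))" using X Y by (rule measurable_Pair)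
  show ?thesis
  proof (rule pair_measure_eqI[symmetric])
    fix A B assume "A \<in> sets (distr M S X)" "B \<in> sets (distr M T Y)"
    then have AB: "A \<in> sets S" "B \<in> sets T" by auto
    have "(\<lambda>\<omega>. (X \<omega>, Y \<omega>)) -` (A \<times> B) \<inter> space M = X -` A \<inter> Y -` B \<inter> space M" by auto
    with AB XY show "emeasure (distr M S X) A * emeasure (distr M T Y) B
        = emeasure (distr M (S \<Otimes>\<^sub>M T) (\<lambda>\<omega>. (X \<omega>, Y \<omega>))) (A \<times> B)"
      using indep[OF AB] X Y
      by (simp add: emeasure_distr emeasure_eq_measure ennreal_mult measurable_sets)
  qed (simp_all add: X.sigma_finite_measure_axioms Y.sigma_finite_measure_axioms)
qed

lemma (in prob_space) distr_pair_of_disjoint_index_sets: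
  assumes indep: "indep_sets E I" and stable: "\<And>i. i \<in> I \<Longrightarrow> Int_stable (E i)"
    and J: "J1 \<subseteq> I" "J2 \<subseteq> I" "J1 \<inter> J2 = {}"
    and X: "X \<in> measurable (sigma (space M) (\<Union>i\<in>J1. E i)) S"
    and Y: "Y \<in> measurable (sigma (space M) (\<Union>i\<in>J2. E i)) T"
    and rv: "random_variable S X" "random_variable T Y"
  shows "distr M (S \<Otimes>\<^sub>M T) (\<lambda>\<omega>. (X \<omega>, Y \<omega>)) = distr M S X \<Otimes>\<^sub>M distr M T Y"
proof (rule distr_pair_eq_pair_measure[OF rv])
  have "indep_sets (\<lambda>j. sigma_sets (space M) (\<Union>i\<in>case_bool J1 J2 j. E i)) UNIV"
  proof (rule indep_sets_collect_sigma)
    show "indep_sets E (\<Union>j. case_bool J1 J2 j)"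
      using J by (intro indep_sets_mono_index[OF _ indep]) (auto split: bool.split_asm)
    show "Int_stable (E i)" if "i \<in> case_bool J1 J2 j" for i j
      using that J stable by (cases j) auto
    show "disjoint_family_on (case_bool J1 J2) UNIV"
      using J by (auto simp: disjoint_family_on_def split: bool.split)
  qed
  then have G: "indep_set (sigma_sets (space M) (\<Union>i\<in>J1. E i)) (sigma_sets (space M) (\<Union>i\<in>J2. E i))"
    unfolding indep_set_def by (simp add: case_bool_if if_distrib)
  have "E i \<subseteq> events" if "i \<in> I" for i
    using indep that unfolding indep_sets_def by blast
  then have Pow: "(\<Union>i\<in>J. E i) \<subseteq> Pow (space M)" if "J \<subseteq> I" for J
    using that sets.space_closed by blast
  fix A B assume "A \<in> sets S" "B \<in> sets T"
  then have "X -` A \<inter> space M \<in> sigma_sets (space M) (\<Union>i\<in>J1. E i)"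
    and "Y -` B \<inter> space M \<in> sigma_sets (space M) (\<Union>i\<in>J2. E i)"
    using measurable_sets[OF X] measurable_sets[OF Y] Pow[OF J(1)] Pow[OF J(2)]
    by (simp_all add: space_measure_of_conv)
  from indep_setD[OF G this]
  show "prob (X -` A \<inter> Y -` B \<inter> space M) = prob (X -` A \<inter> space M) * prob (Y -` B \<inter> space M)"
    by (simp add: Int_ac)
qed

lemma (in prob_space) nn_integral_indep_pair:
  assumes X: "random_variable S X" and Y: "random_variable T Y"
    and prod: "distr M (S \<Otimes>\<^sub>M T) (\<lambda>\<omega>. (X \<omega>, Y \<omega>)) = distr M S X \<Otimes>\<^sub>M distr M T Y"
    and f: "f \<in> borel_measurable (S \<Otimes>\<^sub>M T)"
  shows "(\<integral>\<^sup>+ \<omega>. f (X \<omega>, Y \<omega>) \<partial>M) = (\<integral>\<^sup>+ x. \<integral>\<^sup>+ y. f (x, y) \<partial>distr M T Y \<partial>distr M S X)"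
proof -
  interpret Y: prob_space "distr M T Y" by (rule prob_space_distr[OF Y])
  have "(\<integral>\<^sup>+ \<omega>. f (X \<omega>, Y \<omega>) \<partial>M) = (\<integral>\<^sup>+ p. f p \<partial>distr M (S \<Otimes>\<^sub>M T) (\<lambda>\<omega>. (X \<omega>, Y \<omega>)))"
    using X Y f by (intro nn_integral_distr[symmetric]) auto
  also have "\<dots> = (\<integral>\<^sup>+ x. \<integral>\<^sup>+ y. f (x, y) \<partial>distr M T Y \<partial>distr M S X)"
    using f unfolding prod by (intro Y.nn_integral_fst[symmetric]) simp
  finally show ?thesis .
qed

lemma Int_stable_vimages: "Int_stable {V -` A \<inter> \<Omega> |A. A \<in> sets N}"
proof (rule Int_stableI)
  fix a b assume "a \<in> {V -` A \<inter> \<Omega> |A. A \<in> sets N}" "b \<in> {V -` A \<inter> \<Omega> |A. A \<in> sets N}"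
  then obtain A B where "a = V -` A \<inter> \<Omega>" "b = V -` B \<inter> \<Omega>" "A \<in> sets N" "B \<in> sets N" by auto
  then show "a \<inter> b \<in> {V -` A \<inter> \<Omega> |A. A \<in> sets N}"
    by (intro CollectI exI[of _ "A \<inter> B"]) auto
qed

lemma measurable_sigma_UN_vimages:
  assumes "(\<Union>i\<in>S. E i) \<subseteq> Pow \<Omega>" "i \<in> S" "{V -` A \<inter> \<Omega> |A. A \<in> sets N} \<subseteq> E i"
    and "V \<in> \<Omega> \<rightarrow> space N"
  shows "V \<in> measurable (sigma \<Omega> (\<Union>i\<in>S. E i)) N"
proof (rule measurableI)
  fix A assume "A \<in> sets N"
  then have "V -` A \<inter> \<Omega> \<in> (\<Union>i\<in>S. E i)" using assms(2,3) by blast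
  then show "V -` A \<inter> space (sigma \<Omega> (\<Union>i\<in>S. E i)) \<in> sets (sigma \<Omega> (\<Union>i\<in>S. E i))"
    using assms(1) by (simp add: space_measure_of_conv)
qed (use assms(4) in \<open>auto simp: space_measure_of_conv\<close>)

section \<open>The iterated scheme\<close>

lemma measurable_euler_iter:
  fixes b :: "real^'d::finite \<Rightarrow> real^'n::finite \<Rightarrow> real^'d"
  assumes b: "(\<lambda>(x, u). b x u) \<in> borel_measurable borel"
    and X0: "X0 \<in> borel_measurable N" and U: "\<And>j. j < k \<Longrightarrow> U j \<in> borel_measurable N"
    and Z: "\<And>j. 1 \<le> j \<Longrightarrow> j \<le> k \<Longrightarrow> Z j \<in> borel_measurable N"
  shows "euler_iter h \<beta> b X0 U Z k \<in> borel_measurable N"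
  using U Z
proof (induction k)
  case 0
  have "euler_iter h \<beta> b X0 U Z 0 = X0" by (rule ext) simp
  with X0 show ?case by simp
next
  case (Suc k)
  have Xk: "euler_iter h \<beta> b X0 U Z k \<in> borel_measurable N" using Suc by auto
  have "(\<lambda>\<omega>. (\<lambda>(x, u). b x u) (euler_iter h \<beta> b X0 U Z k \<omega>, U k \<omega>)) \<in> borel_measurable N"
    using b Suc.prems(1)
    by (intro measurable_compose[OF measurable_Pair[OF Xk]]) (auto simp: borel_prod)
  then show ?case using Xk Suc.prems(2) by simp
qed

lemma distr_euler_iter_step:
  fixes b :: "real^'d::finite \<Rightarrow> real^'n::finite \<Rightarrow> real^'d" and X0 :: "'w \<Rightarrow> real^'d"
    and U :: "nat \<Rightarrow> 'w \<Rightarrow> real^'n" and Z :: "nat \<Rightarrow> 'w \<Rightarrow> real^'d" and h \<beta> :: real and k :: nat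
  defines "Y \<equiv> euler_iter h \<beta> b X0 U Z k"
  assumes M: "prob_space M" and b: "(\<lambda>(x, u). b x u) \<in> borel_measurable borel"
    and X0: "X0 \<in> borel_measurable M" and U: "\<And>j. U j \<in> borel_measurable M"
    and Z: "\<And>j. 1 \<le> j \<Longrightarrow> Z j \<in> borel_measurable M" and indep: "joint_indep M X0 U Z"
  shows "distr M (borel \<Otimes>\<^sub>M borel) (\<lambda>\<omega>. (Y \<omega>, U k \<omega>)) = distr M borel Y \<Otimes>\<^sub>M distr M borel (U k)"
    and "distr M ((borel \<Otimes>\<^sub>M borel) \<Otimes>\<^sub>M borel) (\<lambda>\<omega>. ((Y \<omega>, U k \<omega>), Z (Suc k) \<omega>))
      = distr M (borel \<Otimes>\<^sub>M borel) (\<lambda>\<omega>. (Y \<omega>, U k \<omega>)) \<Otimes>\<^sub>M distr M borel (Z (Suc k))"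
proof -
  interpret prob_space M by fact
  define E where "E i = (case i of
      IX0 \<Rightarrow> {X0 -` A \<inter> space M | A. A \<in> sets borel}
    | IU j \<Rightarrow> {U j -` A \<inter> space M | A. A \<in> sets borel}
    | IZ j \<Rightarrow> {Z j -` A \<inter> space M | A. A \<in> sets borel})" for i
  have ind: "indep_sets E noise_index_set"
    using indep unfolding joint_indep_def E_def .
  have stable: "Int_stable (E i)" for i
    unfolding E_def by (cases i) (auto intro: Int_stable_vimages)
  have Pow: "(\<Union>i\<in>S. E i) \<subseteq> Pow (space M)" for S
    unfolding E_def by (auto split: noise_idx.splits)
  have mX0: "X0 \<in> borel_measurable (sigma (space M) (\<Union>i\<in>S. E i))" if "IX0 \<in> S" for S
    by (rule measurable_sigma_UN_vimages[OF Pow that]) (auto simp: E_def)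
  have mU: "U j \<in> borel_measurable (sigma (space M) (\<Union>i\<in>S. E i))" if "IU j \<in> S" for S j
    by (rule measurable_sigma_UN_vimages[OF Pow that]) (auto simp: E_def)
  have mZ: "Z j \<in> borel_measurable (sigma (space M) (\<Union>i\<in>S. E i))" if "IZ j \<in> S" for S j
    by (rule measurable_sigma_UN_vimages[OF Pow that]) (auto simp: E_def)
  define H where "H = {IX0} \<union> IU ` {..<k} \<union> IZ ` {1..k}"
  have YH: "Y \<in> borel_measurable (sigma (space M) (\<Union>i\<in>S. E i))" if "H \<subseteq> S" for S
    unfolding Y_def using that
    by (intro measurable_euler_iter[OF b] mX0 mU mZ) (auto simp: H_def)
  have Ym: "Y \<in> borel_measurable M"
    unfolding Y_def using X0 U Z by (intro measurable_euler_iter[OF b]) auto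
  have HN: "H \<subseteq> noise_index_set" "IU k \<notin> H" "IZ (Suc k) \<notin> insert (IU k) H"
    by (auto simp: H_def noise_index_set_def)
  show "distr M (borel \<Otimes>\<^sub>M borel) (\<lambda>\<omega>. (Y \<omega>, U k \<omega>)) = distr M borel Y \<Otimes>\<^sub>M distr M borel (U k)"
  proof (rule distr_pair_of_disjoint_index_sets[OF ind stable])
    show "Y \<in> borel_measurable (sigma (space M) (\<Union>i\<in>H. E i))" by (rule YH) simp
    show "U k \<in> borel_measurable (sigma (space M) (\<Union>i\<in>{IU k}. E i))" by (rule mU) simp
  qed (use HN Ym U in \<open>auto simp: noise_index_set_def\<close>)
  show "distr M ((borel \<Otimes>\<^sub>M borel) \<Otimes>\<^sub>M borel) (\<lambda>\<omega>. ((Y \<omega>, U k \<omega>), Z (Suc k) \<omega>))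
      = distr M (borel \<Otimes>\<^sub>M borel) (\<lambda>\<omega>. (Y \<omega>, U k \<omega>)) \<Otimes>\<^sub>M distr M borel (Z (Suc k))"
  proof (rule distr_pair_of_disjoint_index_sets[OF ind stable])
    show "(\<lambda>\<omega>. (Y \<omega>, U k \<omega>))
        \<in> measurable (sigma (space M) (\<Union>i\<in>insert (IU k) H. E i)) (borel \<Otimes>\<^sub>M borel)"
      by (intro measurable_Pair YH mU) auto
    show "Z (Suc k) \<in> borel_measurable (sigma (space M) (\<Union>i\<in>{IZ (Suc k)}. E i))"
      by (rule mZ) simp
  qed (use HN Ym U Z in \<open>auto simp: noise_index_set_def\<close>)
qed

lemma nn_integral_euler_iter_Suc:
  fixes b :: "real^'d::finite \<Rightarrow> real^'n::finite \<Rightarrow> real^'d" and f :: "real^'d \<Rightarrow> ennreal"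
  assumes M: "prob_space M" and b: "(\<lambda>(x, u). b x u) \<in> borel_measurable borel"
    and X0: "X0 \<in> borel_measurable M"
    and U: "\<And>j. U j \<in> borel_measurable M" "\<And>j. distr M borel (U j) = Lw"
    and Z: "\<And>j. 1 \<le> j \<Longrightarrow> distributed M lborel (Z j) std_gauss_density"
    and indep: "joint_indep M X0 U Z" and f: "f \<in> borel_measurable borel"
  shows "(\<integral>\<^sup>+ \<omega>. f (euler_iter h \<beta> b X0 U Z (Suc k) \<omega>) \<partial>M)
    = (\<integral>\<^sup>+ y. \<integral>\<^sup>+ u. \<integral>\<^sup>+ z. f (y + h *\<^sub>R b y u + (\<beta> * sqrt h) *\<^sub>R z) \<partial>std_gauss \<partial>Lw
         \<partial>distr M borel (euler_iter h \<beta> b X0 U Z k))"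
proof -
  interpret prob_space M by fact
  interpret N: prob_space "std_gauss :: (real^'d) measure" by (rule prob_space_std_gauss)
  define Y where "Y = euler_iter h \<beta> b X0 U Z k"
  have Zm: "Z j \<in> borel_measurable M" if "1 \<le> j" for j
    using distributed_measurable[OF Z[OF that]] by simp
  have Ym: "Y \<in> borel_measurable M"
    unfolding Y_def using X0 U Zm by (intro measurable_euler_iter[OF b]) auto
  have YUm: "random_variable (borel \<Otimes>\<^sub>M borel) (\<lambda>\<omega>. (Y \<omega>, U k \<omega>))"
    using Ym U(1) by (rule measurable_Pair)
  have Zd: "distr M borel (Z (Suc k)) = std_gauss"
    using distributed_distr_eq_density[OF Z] by (subst distr_cong[of M M borel lborel]) auto
  note YU = distr_euler_iter_step(1)[OF M b X0 U(1) Zm indep, of h \<beta> k, folded Y_def, unfolded U(2)]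
  note YUZ = distr_euler_iter_step(2)[OF M b X0 U(1) Zm indep, of h \<beta> k, folded Y_def]
  define g where
    "g p = f (fst (fst p) + h *\<^sub>R b (fst (fst p)) (snd (fst p)) + (\<beta> * sqrt h) *\<^sub>R snd p)"
    for p :: "((real^'d) \<times> (real^'n)) \<times> (real^'d)"
  have "(\<lambda>p. b (fst (fst p)) (snd (fst p))) \<in> borel_measurable ((borel \<Otimes>\<^sub>M borel) \<Otimes>\<^sub>M borel)"
    using measurable_compose[OF measurable_fst, of "\<lambda>(x, u). b x u"] b
    by (simp add: borel_prod case_prod_beta)
  then have g: "g \<in> borel_measurable ((borel \<Otimes>\<^sub>M borel) \<Otimes>\<^sub>M borel)"
    unfolding g_def using f by measurable
  have "sets ((borel \<Otimes>\<^sub>M borel) \<Otimes>\<^sub>M (std_gauss :: (real^'d) measure))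
      = sets ((borel \<Otimes>\<^sub>M borel) \<Otimes>\<^sub>M (borel :: (real^'d) measure))"
    by (intro sets_pair_measure_cong) auto
  then have g_fst: "(\<lambda>p. \<integral>\<^sup>+ z. g (p, z) \<partial>std_gauss) \<in> borel_measurable (borel \<Otimes>\<^sub>M borel)"
    using g by (intro N.borel_measurable_nn_integral_fst) (simp cong: measurable_cong_sets)
  have "(\<integral>\<^sup>+ \<omega>. f (euler_iter h \<beta> b X0 U Z (Suc k) \<omega>) \<partial>M)
      = (\<integral>\<^sup>+ \<omega>. g ((Y \<omega>, U k \<omega>), Z (Suc k) \<omega>) \<partial>M)"
    by (simp add: g_def Y_def)
  also have "\<dots> = (\<integral>\<^sup>+ p. \<integral>\<^sup>+ z. g (p, z) \<partial>std_gauss \<partial>distr M (borel \<Otimes>\<^sub>M borel) (\<lambda>\<omega>. (Y \<omega>, U k \<omega>)))"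
    using nn_integral_indep_pair[OF YUm Zm YUZ g] Zd by simp
  also have "\<dots> = (\<integral>\<^sup>+ \<omega>. \<integral>\<^sup>+ z. g ((Y \<omega>, U k \<omega>), z) \<partial>std_gauss \<partial>M)"
    using YUm g_fst by (intro nn_integral_distr) auto
  also have "\<dots> = (\<integral>\<^sup>+ y. \<integral>\<^sup>+ u. \<integral>\<^sup>+ z. g ((y, u), z) \<partial>std_gauss \<partial>Lw \<partial>distr M borel Y)"
    using nn_integral_indep_pair[OF Ym U(1) YU[folded U(2)[of k]] g_fst] U(2) by simp
  finally show ?thesis by (simp add: g_def Y_def)
qed

lemma euler_iter_fourth_moment_le:
  fixes b :: "real^'d::finite \<Rightarrow> real^'n::finite \<Rightarrow> real^'d" and q c R :: real
  assumes M: "prob_space M" and b: "(\<lambda>(x, u). b x u) \<in> borel_measurable borel"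
    and X0: "X0 \<in> borel_measurable M"
    and U: "\<And>j. U j \<in> borel_measurable M" "\<And>j. distr M borel (U j) = Lw"
    and Z: "\<And>j. 1 \<le> j \<Longrightarrow> distributed M lborel (Z j) std_gauss_density"
    and indep: "joint_indep M X0 U Z"
    and step: "\<And>y. (\<integral>\<^sup>+ u. \<integral>\<^sup>+ z. ennreal (norm (y + h *\<^sub>R b y u + (\<beta> * sqrt h) *\<^sub>R z) ^ 4)
      \<partial>std_gauss \<partial>Lw)
      \<le> ennreal (q * norm y ^ 4 + c)"
    and qc: "0 \<le> q" "0 \<le> c" "0 \<le> R" "c \<le> (1 - q) * R"
    and init: "(\<integral>\<^sup>+ \<omega>. ennreal (norm (X0 \<omega>) ^ 4) \<partial>M) \<le> ennreal R"
  shows "(\<integral>\<^sup>+ \<omega>. ennreal (norm (euler_iter h \<beta> b X0 U Z k \<omega>) ^ 4) \<partial>M) \<le> ennreal R"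
proof (induction k)
  case 0
  then show ?case using init by simp
next
  case (Suc k)
  interpret prob_space M by fact
  define Y where "Y = euler_iter h \<beta> b X0 U Z k"
  have "Z j \<in> borel_measurable M" if "1 \<le> j" for j
    using distributed_measurable[OF Z[OF that]] by simp
  then have Y: "Y \<in> borel_measurable M"
    unfolding Y_def using X0 U by (intro measurable_euler_iter[OF b]) auto
  have "(\<integral>\<^sup>+ \<omega>. ennreal (norm (euler_iter h \<beta> b X0 U Z (Suc k) \<omega>) ^ 4) \<partial>M)
      = (\<integral>\<^sup>+ y. \<integral>\<^sup>+ u. \<integral>\<^sup>+ z. ennreal (norm (y + h *\<^sub>R b y u + (\<beta> * sqrt h) *\<^sub>R z) ^ 4) \<partial>std_gauss \<partial>Lw
         \<partial>distr M borel Y)"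
    unfolding Y_def by (rule nn_integral_euler_iter_Suc[OF M b X0 U Z indep]) measurable
  also have "\<dots> \<le> (\<integral>\<^sup>+ y. ennreal (q * norm y ^ 4 + c) \<partial>distr M borel Y)"
    by (intro nn_integral_mono step)
  also have "\<dots> = (\<integral>\<^sup>+ \<omega>. ennreal q * ennreal (norm (Y \<omega>) ^ 4) + ennreal c \<partial>M)"
    using Y qc by (subst nn_integral_distr) (auto simp: ennreal_mult)
  also have "\<dots> = ennreal q * (\<integral>\<^sup>+ \<omega>. ennreal (norm (Y \<omega>) ^ 4) \<partial>M) + ennreal c"
    using Y by (simp add: nn_integral_add nn_integral_cmult emeasure_space_1)
  also have "\<dots> \<le> ennreal q * ennreal R + ennreal c"
    using Suc.IH unfolding Y_def by (intro add_right_mono mult_left_mono) auto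
  also have "\<dots> = ennreal (q * R + c)"
    using qc by (simp add: ennreal_mult)
  also have "\<dots> \<le> ennreal R"
    using qc by (intro ennreal_leI) (simp add: algebra_simps)
  finally show ?case .
qed

lemma euler_iter_fourth_moment_uniform:
  fixes b :: "real^'d::finite \<Rightarrow> real^'n::finite \<Rightarrow> real^'d" and K C h :: real
  assumes K: "0 < K" "K * h \<le> 1" and C: "0 \<le> C" and h: "0 < h"
    and step: "\<And>y. (\<integral>\<^sup>+ u. \<integral>\<^sup>+ z. ennreal (norm (y + h *\<^sub>R b y u + (\<beta> * sqrt h) *\<^sub>R z) ^ 4)
      \<partial>std_gauss \<partial>Lw)
      \<le> ennreal ((1 - K * h / 2) * norm y ^ 4 + h * C)"
    and M: "prob_space M" and b: "(\<lambda>(x, u). b x u) \<in> borel_measurable borel"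
    and X0: "X0 \<in> borel_measurable M" "distr M borel X0 = \<nu>0"
    and \<nu>0: "(\<integral>\<^sup>+ x. ennreal (norm x ^ 4) \<partial>\<nu>0) < \<infinity>"
    and U: "\<And>j. U j \<in> borel_measurable M" "\<And>j. distr M borel (U j) = Lw"
    and Z: "\<And>j. 1 \<le> j \<Longrightarrow> distributed M lborel (Z j) std_gauss_density"
    and indep: "joint_indep M X0 U Z"
  shows "(\<integral>\<^sup>+ \<omega>. ennreal (norm (euler_iter h \<beta> b X0 U Z k \<omega>) ^ 4) \<partial>M)
    \<le> ennreal (enn2real (\<integral>\<^sup>+ x. ennreal (norm x ^ 4) \<partial>\<nu>0) + 2 * C / K)"
proof (rule euler_iter_fourth_moment_le[OF M b X0(1) U Z indep step])
  show "(\<integral>\<^sup>+ \<omega>. ennreal (norm (X0 \<omega>) ^ 4) \<partial>M)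
      \<le> ennreal (enn2real (\<integral>\<^sup>+ x. ennreal (norm x ^ 4) \<partial>\<nu>0) + 2 * C / K)"
  proof -
    have "(\<integral>\<^sup>+ \<omega>. ennreal (norm (X0 \<omega>) ^ 4) \<partial>M) = (\<integral>\<^sup>+ x. ennreal (norm x ^ 4) \<partial>\<nu>0)"
      unfolding X0(2)[symmetric] using X0(1) by (simp add: nn_integral_distr)
    also have "\<dots> = ennreal (enn2real (\<integral>\<^sup>+ x. ennreal (norm x ^ 4) \<partial>\<nu>0))"
      using \<nu>0 by (simp add: ennreal_enn2real_if)
    also have "\<dots> \<le> ennreal (enn2real (\<integral>\<^sup>+ x. ennreal (norm x ^ 4) \<partial>\<nu>0) + 2 * C / K)"
      using K C by (intro ennreal_leI) auto
    finally show ?thesis .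
  qed
  show "h * C \<le> (1 - (1 - K * h / 2)) * (enn2real (\<integral>\<^sup>+ x. ennreal (norm x ^ 4) \<partial>\<nu>0) + 2 * C / K)"
    using K C h by (simp add: field_simps)
qed (use K C h in auto)

theorem lemma11:
  fixes a :: "real^'d \<Rightarrow> real^'d"
    and b :: "real^'d \<Rightarrow> real^'n \<Rightarrow> real^'d"
    and law :: "nat \<Rightarrow> (real^'n) measure"
    and \<beta> :: real
    and \<nu>0 :: "(real^'d) measure"
  assumes beta_nonneg: "\<beta> \<ge> 0"
    and a_meas: "a \<in> borel_measurable borel"
    and b_meas: "(\<lambda>(x, u). b x u) \<in> borel_measurable borel"
    and law_prob: "\<And>s. s \<ge> 1 \<Longrightarrow> prob_space (law s)"
    and law_sets: "\<And>s. s \<ge> 1 \<Longrightarrow> sets (law s) = sets borel"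
    and unbiased: "\<And>s x. s \<ge> 1 \<Longrightarrow> integrable (law s) (b x) \<and> (\<integral>u. b x u \<partial>law s) = a x"
    \<comment> \<open>(A1)\<close>
    and A1_lip: "\<exists>L. \<forall>x y. norm (a x - a y) \<le> L * norm (x - y)"
    and A1_mon: "\<exists>K>0. \<forall>x y. inner (x - y) (a x - a y) \<le> - K * (norm (x - y))\<^sup>2"
    and A1_C2: "\<exists>Ca1 Ca2. C2_bounded a Ca1 Ca2"
    \<comment> \<open>(A4)\<close>
    and A4: "\<exists>\<kappa> \<sigma>4. \<forall>s\<ge>1. \<sigma>4 s \<le> \<kappa> / (real s)\<^sup>2 \<and>
               (\<forall>x. (\<integral>\<^sup>+ u. ennreal ((norm (b x u - a x))^4) \<partial>law s)
                      \<le> ennreal (\<sigma>4 s * (1 + (norm x)^4)))"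
    \<comment> \<open>(A7)\<close>
    and A7: "\<exists>L04. \<forall>x. (norm (a x))^4 \<le> L04 * (1 + (norm x)^4)"
    \<comment> \<open>law of X_0, with finite fourth moment\<close>
    and nu0_prob: "prob_space \<nu>0"
    and nu0_sets: "sets \<nu>0 = sets borel"
    and nu0_moment: "(\<integral>\<^sup>+ x. ennreal ((norm x)^4) \<partial>\<nu>0) < \<infinity>"
  shows "\<exists>h0>0. \<exists>C>0. \<forall>s\<ge>1. \<forall>h. 0 < h \<and> h < h0 \<longrightarrow>
           (\<forall>(M :: 'w measure) X0 U Z.
              prob_space M \<and>
              X0 \<in> borel_measurable M \<and> distr M borel X0 = \<nu>0 \<and>
              (\<forall>k. U k \<in> borel_measurable M \<and> distr M borel (U k) = law s) \<and>
              (\<forall>k\<ge>1. distributed M lborel (Z k) std_gauss_density) \<and>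
              joint_indep M X0 U Z
              \<longrightarrow> (\<forall>k\<ge>1. (\<integral>\<^sup>+ \<omega>. ennreal ((norm (euler_iter h \<beta> b X0 U Z k \<omega>))^4) \<partial>M)
                          \<le> ennreal C))"
proof -
  obtain L where L: "\<forall>x y. norm (a x - a y) \<le> L * norm (x - y)" using A1_lip by blast
  obtain K where K: "0 < K" and mono: "\<forall>x y. inner (x - y) (a x - a y) \<le> - K * (norm (x - y))\<^sup>2"
    using A1_mon by blast
  obtain \<kappa> \<sigma>4 where A4': "\<forall>s\<ge>1. \<sigma>4 s \<le> \<kappa> / (real s)\<^sup>2 \<and>
      (\<forall>x. (\<integral>\<^sup>+ u. ennreal ((norm (b x u - a x))^4) \<partial>law s) \<le> ennreal (\<sigma>4 s * (1 + (norm x)^4)))"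
    using A4 by blast
  have law: "drift_law a b (max \<kappa> 0) (law s)" if "1 \<le> s" for s
    using A4' law_prob unbiased that by (intro drift_law_of_moment_bound[where s = s]) auto
  have "y \<bullet> (a y - a 0) \<le> - K * (norm y)\<^sup>2" "norm (a y - a 0) \<le> max L 0 * norm y" for y
    using mono[rule_format, of y 0] L[rule_format, of y 0]
    by (simp_all add: max_mult_distrib_right max.coboundedI1)
  then obtain h0 C where h0: "0 < h0" and C: "0 \<le> C" and contraction:
    "\<And>h. 0 < h \<Longrightarrow> h < h0 \<Longrightarrow> K * h \<le> 1 \<and> (\<forall>Lw y. drift_law a b (max \<kappa> 0) Lw \<longrightarrow>
       (\<integral>\<^sup>+ u. \<integral>\<^sup>+ z. ennreal (norm (y + h *\<^sub>R b y u + (\<beta> * sqrt h) *\<^sub>R z) ^ 4) \<partial>std_gauss \<partial>Lw)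
         \<le> ennreal ((1 - K * h / 2) * norm y ^ 4 + h * C))"
    using euler_step_contraction[OF K, of "max L 0" "max \<kappa> 0" a b \<beta>] by auto
  define R where "R = enn2real (\<integral>\<^sup>+ x. ennreal (norm x ^ 4) \<partial>\<nu>0) + 2 * C / K"
  have "0 \<le> R" unfolding R_def using K C by (intro add_nonneg_nonneg divide_nonneg_pos) auto
  then have R: "0 < R + 1" by simp
  show ?thesis
  proof (rule exI[of _ h0], rule conjI[OF h0], rule exI[of _ "R + 1"], rule conjI[OF R],
      intro allI impI)
    fix s :: nat and h :: real and M :: "'w measure" and X0 U Z and k :: nat
    assume "1 \<le> s" "0 < h \<and> h < h0" and "prob_space M \<and>
      X0 \<in> borel_measurable M \<and> distr M borel X0 = \<nu>0 \<and>
      (\<forall>k. U k \<in> borel_measurable M \<and> distr M borel (U k) = law s) \<and>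
      (\<forall>k\<ge>1. distributed M lborel (Z k) std_gauss_density) \<and> joint_indep M X0 U Z" "1 \<le> k"
    with contraction law b_meas nu0_moment
    have "(\<integral>\<^sup>+ \<omega>. ennreal ((norm (euler_iter h \<beta> b X0 U Z k \<omega>))^4) \<partial>M) \<le> ennreal R"
      unfolding R_def by (intro euler_iter_fourth_moment_uniform[OF K _ C, where Lw = "law s"]) auto
    then show "(\<integral>\<^sup>+ \<omega>. ennreal ((norm (euler_iter h \<beta> b X0 U Z k \<omega>))^4) \<partial>M) \<le> ennreal (R + 1)"
      by (rule order_trans) (simp add: ennreal_leI)
  qed
qed

end
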